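(* Assume Assumptions 1, 2, 3 and 4 (stated in the context) hold. Then for every $a_1,a_2\in\{1,\dots,r\}$ and every closed bounded interval $[\lambda_l,\lambda_u]\subset\mathbb R$, $$\sup_{\lambda\in[\lambda_l,\lambda_u]}\Big|E\big[\widehat\phi_{a_1a_2}(\lambda)\big]-\phi_{a_1a_2}(\lambda)\Big|\longrightarrow 0\quad (n\to\infty),$$ i.e. the bias of $\widehat\phi_{a_1a_2}$ tends to zero uniformly over any closed and finite interval.
   Context: Let $\mathbf X=\{(X_1(t),\dots,X_r(t)):t\in\mathbb R\}$ be a real-valued, zero-mean, mean-square continuous, stationary vector process. For $a,b\in\{1,\dots,r\}$ let $C_{ab}(\tau)=E[X_a(t+\tau)X_b(t)]$ and $\phi_{ab}(\lambda)=\frac{1}{2\pi}\int_{-\infty}^\infty C_{ab}(t)e^{-it\lambda}\,dt$. Given a kernel $K:\mathbb R\to\mathbb R$, bandwidths $b_n>0$ and sampling rates $\rho_n>0$, the estimator based on the $n$ samples $\mathbf X(t/\rho_n)$, $t=1,\dots,n$, is $$\widehat\phi_{ab}(\lambda)=\frac{1}{2\pi n\rho_n}\sum_{t_1=1}^n\sum_{t_2=1}^n K(b_n(t_1-t_2))X_a\!\left(\tfrac{t_1}{\rho_n}\right)X_b\!\left(\tfrac{t_2}{\rho_n}\right)e^{-i(t_1-t_2)\lambda/\rho_n}\,1_{[-\pi\rho_n,\pi\rho_n]}(\lambda).$$ Assumption 1: for all $a,b$, the function $g_{ab}(t)=\sup_{|s|\ge|t|}|C_{ab}(s)|$ is integrable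 over $\mathbb R$. Assumption 2: $K$ is continuous, even, square integrable, $K(0)=1$, and $|K|\le K_1$ for some non-negative, even, integrable function $K_1$ having a unique maximum at $0$. Assumption 3: $nb_n\to\infty$ as $n\to\infty$. Assumption 4: $\rho_n\to\infty$ and $\rho_nb_n\to0$ as $n\to\infty$. *)

theory Defs
  imports "HOL-Probability.Probability"
begin

text \<open>A real vector process indexed by components a in {1..r} and times t :: real,
  modelled as random variables X a t on a probability space M.\<close>

definition cross_cov :: "'w measure \<Rightarrow> (nat \<Rightarrow> real \<Rightarrow> 'w \<Rightarrow> real) \<Rightarrow> nat \<Rightarrow> nat \<Rightarrow> real \<Rightarrow> real" where
  "cross_cov M X a b \<tau> = (\<integral>\<omega>. X a \<tau> \<omega> * X b 0 \<omega> \<partial>M)"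

definition stationary_process :: "'w measure \<Rightarrow> nat \<Rightarrow> (nat \<Rightarrow> real \<Rightarrow> 'w \<Rightarrow> real) \<Rightarrow> bool" where
  "stationary_process M r X \<longleftrightarrow>
     prob_space M \<and>
     (\<forall>a\<in>{1..r}. \<forall>t. X a t \<in> borel_measurable M \<and> integrable M (\<lambda>\<omega>. (X a t \<omega>)\<^sup>2)) \<and>
     (\<forall>a\<in>{1..r}. \<forall>t. (\<integral>\<omega>. X a t \<omega> \<partial>M) = 0) \<and>
     (\<forall>a\<in>{1..r}. \<forall>t. ((\<lambda>s. \<integral>\<omega>. (X a s \<omega> - X a t \<omega>)\<^sup>2 \<partial>M) \<longlongrightarrow> 0) (at t)) \<and>
     (\<forall>a\<in>{1..r}. \<forall>b\<in>{1..r}. \<forall>t \<tau>.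
        (\<integral>\<omega>. X a (t + \<tau>) \<omega> * X b t \<omega> \<partial>M) = cross_cov M X a b \<tau>)"

definition spec_density :: "(real \<Rightarrow> real) \<Rightarrow> real \<Rightarrow> complex" where
  "spec_density C lam = complex_of_real (1 / (2 * pi)) *
      (\<integral>t. complex_of_real (C t) * cis (- (t * lam)) \<partial>lborel)"

definition spec_estimator ::
  "(real \<Rightarrow> real) \<Rightarrow> real \<Rightarrow> real \<Rightarrow> nat \<Rightarrow> (nat \<Rightarrow> real \<Rightarrow> 'w \<Rightarrow> real) \<Rightarrow> nat \<Rightarrow> nat \<Rightarrow> real \<Rightarrow> 'w \<Rightarrow> complex" where
  "spec_estimator K bn \<rho> n X a b lam \<omega> =
     (if - pi * \<rho> \<le> lam \<and> lam \<le> pi * \<rho> then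
        complex_of_real (1 / (2 * pi * real n * \<rho>)) *
        (\<Sum>t1\<in>{1..n}. \<Sum>t2\<in>{1..n}.
           complex_of_real (K (bn * (real t1 - real t2)) * X a (real t1 / \<rho>) \<omega> * X b (real t2 / \<rho>) \<omega>)
           * cis (- ((real t1 - real t2) * lam / \<rho>)))
      else 0)"

definition assumption1 :: "nat \<Rightarrow> (nat \<Rightarrow> nat \<Rightarrow> real \<Rightarrow> real) \<Rightarrow> bool" where
  "assumption1 r C \<longleftrightarrow> (\<forall>a\<in>{1..r}. \<forall>b\<in>{1..r}.
      integrable lborel (\<lambda>t. SUP s\<in>{s. \<bar>s\<bar> \<ge> \<bar>t\<bar>}. \<bar>C a b s\<bar>))"

definition assumption2 :: "(real \<Rightarrow> real) \<Rightarrow> bool" where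
  "assumption2 K \<longleftrightarrow> continuous_on UNIV K \<and> (\<forall>x. K (- x) = K x) \<and>
      integrable lborel (\<lambda>x. (K x)\<^sup>2) \<and> K 0 = 1 \<and>
      (\<exists>K1. (\<forall>x. K1 x \<ge> 0) \<and> (\<forall>x. K1 (- x) = K1 x) \<and> integrable lborel K1 \<and>
            (\<forall>x. x \<noteq> 0 \<longrightarrow> K1 x < K1 0) \<and> (\<forall>x. \<bar>K x\<bar> \<le> K1 x))"

end

theory Submission
  imports Defs
begin

(* Write C = cross_cov M X a1 a2.  By stationarity the expectation of the estimator is
   the lag-window sum  1/(2 pi rho) * sum_{|k|<=n} (1 - |k|/n) K(b k) C(k/rho) e^{-i k lam/rho},
   which is a Riemann sum with mesh 1/rho for the Fourier integral defining the spectral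
   density.  Apart from the term k = 0 (of size C(0)/rho) it is the integral of a step
   function that converges pointwise to C(u) e^{-i u lam}, because the rounding error is
   at most 1/rho, |k|/n <= |u| rho/n -> 0 and K(b k) = K(rho b * k/rho) -> K 0 = 1.  The
   step function is dominated by sup|K| times the monotone envelope of Assumption 1, so
   dominated convergence gives the limit along any sequence lam_m -> lam0.  Finally
   convergence along all such sequences yields uniform convergence on a compact interval. *)

lemma abs_mult_le_weighted:
  fixes x y c :: real
  assumes c: "c > 0"
  shows "\<bar>x * y\<bar> \<le> (c * x\<^sup>2 + y\<^sup>2 / c) / 2"
proof -
  have "0 \<le> (c * \<bar>x\<bar> - \<bar>y\<bar>)\<^sup>2 / c" using c by simp
  also have "(c * \<bar>x\<bar> - \<bar>y\<bar>)\<^sup>2 / c = c * x\<^sup>2 + y\<^sup>2 / c - 2 * \<bar>x * y\<bar>"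
    using c by (simp add: power2_eq_square field_simps abs_mult)
  finally show ?thesis by simp
qed

lemma proc_sq_integrable:
  assumes "stationary_process M r X" and "a \<in> {1..r}"
  shows "integrable M (\<lambda>\<omega>. (X a s \<omega>)\<^sup>2)"
  using assms unfolding stationary_process_def by auto

lemma proc_product_integrable:
  assumes proc: "stationary_process M r X" and a: "a \<in> {1..r}" and b: "b \<in> {1..r}"
  shows "integrable M (\<lambda>\<omega>. X a s \<omega> * X b t \<omega>)"
proof (rule Bochner_Integration.integrable_bound)
  show "integrable M (\<lambda>\<omega>. (1 * (X a s \<omega>)\<^sup>2 + (X b t \<omega>)\<^sup>2 / 1) / 2)"
    using proc_sq_integrable[OF proc a] proc_sq_integrable[OF proc b] by simp
  show "(\<lambda>\<omega>. X a s \<omega> * X b t \<omega>) \<in> borel_measurable M"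
    using proc a b unfolding stationary_process_def by (intro borel_measurable_times) auto
  show "AE \<omega> in M. norm (X a s \<omega> * X b t \<omega>) \<le> norm ((1 * (X a s \<omega>)\<^sup>2 + (X b t \<omega>)\<^sup>2 / 1) / 2)"
    using abs_mult_le_weighted[of 1] by simp
qed

lemma proc_product_expectation:
  assumes proc: "stationary_process M r X" and a: "a \<in> {1..r}" and b: "b \<in> {1..r}"
  shows "(\<integral>\<omega>. X a s \<omega> * X b t \<omega> \<partial>M) = cross_cov M X a b (s - t)"
proof -
  have "(\<integral>\<omega>. X a (t + (s - t)) \<omega> * X b t \<omega> \<partial>M) = cross_cov M X a b (s - t)"
    using proc a b unfolding stationary_process_def by blast
  then show ?thesis by simp
qed

lemma proc_product_bound:
  assumes proc: "stationary_process M r X" and b: "b \<in> {1..r}" and c: "c > 0"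
    and Y: "integrable M (\<lambda>\<omega>. (Y \<omega>)\<^sup>2)" "integrable M (\<lambda>\<omega>. Y \<omega> * X b t \<omega>)"
  shows "\<bar>\<integral>\<omega>. Y \<omega> * X b t \<omega> \<partial>M\<bar> \<le> (c * (\<integral>\<omega>. (Y \<omega>)\<^sup>2 \<partial>M) + (\<integral>\<omega>. (X b t \<omega>)\<^sup>2 \<partial>M) / c) / 2"
proof -
  have "\<bar>\<integral>\<omega>. Y \<omega> * X b t \<omega> \<partial>M\<bar> \<le> (\<integral>\<omega>. norm (Y \<omega> * X b t \<omega>) \<partial>M)"
    using integral_norm_bound by (metis real_norm_def)
  also have "\<dots> \<le> (\<integral>\<omega>. (c * (Y \<omega>)\<^sup>2 + (X b t \<omega>)\<^sup>2 / c) / 2 \<partial>M)"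
    using Y proc_sq_integrable[OF proc b] abs_mult_le_weighted[OF c]
    by (intro integral_mono) simp_all
  also have "\<dots> = (c * (\<integral>\<omega>. (Y \<omega>)\<^sup>2 \<partial>M) + (\<integral>\<omega>. (X b t \<omega>)\<^sup>2 \<partial>M) / c) / 2"
    using Y proc_sq_integrable[OF proc b] by simp
  finally show ?thesis .
qed

lemma cross_cov_bounded:
  assumes proc: "stationary_process M r X" and a1: "a1 \<in> {1..r}" and a2: "a2 \<in> {1..r}"
  shows "\<bar>cross_cov M X a1 a2 s\<bar> \<le> (cross_cov M X a1 a1 0 + cross_cov M X a2 a2 0) / 2"
proof -
  have "\<bar>cross_cov M X a1 a2 s\<bar> = \<bar>\<integral>\<omega>. X a1 s \<omega> * X a2 0 \<omega> \<partial>M\<bar>" by (simp add: cross_cov_def)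
  also have "\<dots> \<le> (1 * (\<integral>\<omega>. (X a1 s \<omega>)\<^sup>2 \<partial>M) + (\<integral>\<omega>. (X a2 0 \<omega>)\<^sup>2 \<partial>M) / 1) / 2"
    using proc_sq_integrable[OF proc a1] proc_product_integrable[OF proc a1 a2]
    by (intro proc_product_bound[OF proc a2]) auto
  also have "\<dots> = (cross_cov M X a1 a1 0 + cross_cov M X a2 a2 0) / 2"
    using proc_product_expectation[OF proc a1 a1, of s s] proc_product_expectation[OF proc a2 a2, of 0 0]
    by (simp add: power2_eq_square)
  finally show ?thesis .
qed

lemma cross_cov_increment_bound:
  assumes proc: "stationary_process M r X" and a1: "a1 \<in> {1..r}" and a2: "a2 \<in> {1..r}"
    and c: "c > 0"
  shows "\<bar>cross_cov M X a1 a2 s - cross_cov M X a1 a2 t\<bar>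
    \<le> (c * (\<integral>\<omega>. (X a1 s \<omega> - X a1 t \<omega>)\<^sup>2 \<partial>M) + (\<integral>\<omega>. (X a2 0 \<omega>)\<^sup>2 \<partial>M) / c) / 2"
proof -
  have diff_int: "integrable M (\<lambda>\<omega>. (X a1 s \<omega> - X a1 t \<omega>) * X a2 0 \<omega>)"
    using proc_product_integrable[OF proc a1 a2] by (simp add: left_diff_distrib)
  have sq_int: "integrable M (\<lambda>\<omega>. (X a1 s \<omega> - X a1 t \<omega>)\<^sup>2)"
  proof -
    have "(\<lambda>\<omega>. (X a1 s \<omega> - X a1 t \<omega>)\<^sup>2)
        = (\<lambda>\<omega>. (X a1 s \<omega>)\<^sup>2 - 2 * (X a1 s \<omega> * X a1 t \<omega>) + (X a1 t \<omega>)\<^sup>2)"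
      by (simp add: power2_eq_square algebra_simps)
    then show ?thesis
      using proc_sq_integrable[OF proc a1] proc_product_integrable[OF proc a1 a1] by simp
  qed
  have "cross_cov M X a1 a2 s - cross_cov M X a1 a2 t = (\<integral>\<omega>. (X a1 s \<omega> - X a1 t \<omega>) * X a2 0 \<omega> \<partial>M)"
    using proc_product_integrable[OF proc a1 a2] by (simp add: cross_cov_def left_diff_distrib)
  then show ?thesis
    using proc_product_bound[OF proc a2 c sq_int diff_int] by simp
qed

text \<open>Continuity of C from mean-square continuity: choose c large so that V/c is small, then s near t.\<close>
lemma cross_cov_continuous:
  assumes proc: "stationary_process M r X" and a1: "a1 \<in> {1..r}" and a2: "a2 \<in> {1..r}"
  shows "isCont (cross_cov M X a1 a2) t"
  unfolding isCont_def
proof (rule tendstoI)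
  fix e :: real assume e: "e > 0"
  define D where "D s = (\<integral>\<omega>. (X a1 s \<omega> - X a1 t \<omega>)\<^sup>2 \<partial>M)" for s
  define V where "V = (\<integral>\<omega>. (X a2 0 \<omega>)\<^sup>2 \<partial>M)"
  define c where "c = V / e + 1"
  have "V \<ge> 0" unfolding V_def by simp
  then have c: "c > 0" and Vc: "V / c < e"
    using e unfolding c_def by (auto simp: field_simps add_nonneg_pos)
  have "(D \<longlongrightarrow> 0) (at t)" using proc a1 unfolding stationary_process_def D_def by blast
  then have "\<forall>\<^sub>F s in at t. \<bar>D s\<bar> < e / c" using c e by (simp add: tendsto_iff)
  then show "\<forall>\<^sub>F s in at t. dist (cross_cov M X a1 a2 s) (cross_cov M X a1 a2 t) < e"
  proof eventually_elim
    case (elim s)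
    then have "c * D s < e" using c by (simp add: field_simps abs_less_iff)
    moreover have "\<bar>cross_cov M X a1 a2 s - cross_cov M X a1 a2 t\<bar> \<le> (c * D s + V / c) / 2"
      using cross_cov_increment_bound[OF proc a1 a2 c, of s t] unfolding D_def V_def .
    ultimately show ?case using Vc unfolding dist_real_def by argo
  qed
qed

lemma cross_cov_envelope:
  assumes proc: "stationary_process M r X" and A1: "assumption1 r (cross_cov M X)"
    and a1: "a1 \<in> {1..r}" and a2: "a2 \<in> {1..r}"
  obtains g where "integrable lborel g" "\<And>s. \<bar>cross_cov M X a1 a2 s\<bar> \<le> g s"
    "\<And>s t. \<bar>s\<bar> \<le> \<bar>t\<bar> \<Longrightarrow> g t \<le> g s"
proof
  define g where "g t = (SUP s\<in>{s. \<bar>s\<bar> \<ge> \<bar>t\<bar>}. \<bar>cross_cov M X a1 a2 s\<bar>)" for t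
  have bdd: "bdd_above ((\<lambda>s. \<bar>cross_cov M X a1 a2 s\<bar>) ` A)" for A
    using cross_cov_bounded[OF proc a1 a2]
    by (intro bdd_aboveI[of _ "(cross_cov M X a1 a1 0 + cross_cov M X a2 a2 0) / 2"]) auto
  show "integrable lborel g" using A1 a1 a2 unfolding assumption1_def g_def by blast
  show "\<bar>cross_cov M X a1 a2 s\<bar> \<le> g s" for s unfolding g_def by (rule cSUP_upper[OF _ bdd]) simp
  show "g t \<le> g s" if "\<bar>s\<bar> \<le> \<bar>t\<bar>" for s t
    unfolding g_def using that by (intro cSUP_subset_mono bdd) auto
qed

lemma assumption2_kernel:
  assumes "assumption2 K"
  obtains B where "\<And>x. isCont K x" "K 0 = 1" "\<And>x. \<bar>K x\<bar> \<le> B"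
proof -
  from assms obtain K1 where K1: "\<And>x. x \<noteq> 0 \<Longrightarrow> K1 x < K1 0" "\<And>x. \<bar>K x\<bar> \<le> K1 x"
    and Kc: "continuous_on UNIV K" and K0: "K 0 = 1"
    unfolding assumption2_def by blast
  have "\<bar>K x\<bar> \<le> K1 0" for x using K1[of x] by (cases "x = 0") force+
  moreover have "isCont K x" for x using Kc by (simp add: continuous_on_eq_continuous_at)
  ultimately show thesis using K0 that by blast
qed

lemma card_lag_pairs:
  fixes N k :: int
  assumes "\<bar>k\<bar> \<le> N"
  shows "card {j\<in>{1..N}. 1 \<le> j + k \<and> j + k \<le> N} = nat (N - \<bar>k\<bar>)"
proof -
  have "{j\<in>{1..N}. 1 \<le> j + k \<and> j + k \<le> N} = {max 1 (1-k)..min N (N-k)}" by auto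
  moreover have "min N (N-k) - max 1 (1-k) + 1 = N - \<bar>k\<bar>" by (cases "k \<ge> 0") auto
  ultimately show ?thesis by simp
qed

lemma sum_by_lag_int:
  fixes f :: "int \<Rightarrow> 'a::comm_ring_1" and N :: int
  shows "(\<Sum>i\<in>{1..N}. \<Sum>j\<in>{1..N}. f (i - j)) = (\<Sum>k\<in>{-N..N}. of_int (N - \<bar>k\<bar>) * f k)"
proof -
  define P where "P j k \<longleftrightarrow> 1 \<le> j + k \<and> j + k \<le> N" for j k :: int
  have inner: "(\<Sum>i\<in>{1..N}. f (i - j)) = (\<Sum>k\<in>{-N..N}. if P j k then f k else 0)"
    if j: "j \<in> {1..N}" for j
  proof -
    have "{k\<in>{-N..N}. P j k} = (\<lambda>i. i - j) ` {1..N}"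
      using j unfolding P_def by (auto intro!: image_eqI[of _ _ "j + _"])
    then have "(\<Sum>k\<in>{-N..N}. if P j k then f k else 0) = (\<Sum>k\<in>(\<lambda>i. i - j) ` {1..N}. f k)"
      by (simp add: sum.inter_filter[symmetric])
    also have "\<dots> = (\<Sum>i\<in>{1..N}. f (i - j))" by (subst sum.reindex) (auto simp: inj_on_def)
    finally show ?thesis ..
  qed
  have count: "(\<Sum>j\<in>{1..N}. if P j k then f k else 0) = of_int (N - \<bar>k\<bar>) * f k"
    if k: "k \<in> {-N..N}" for k
  proof -
    have "\<bar>k\<bar> \<le> N" using k by auto
    have "(\<Sum>j\<in>{1..N}. if P j k then f k else 0) = of_nat (card {j\<in>{1..N}. P j k}) * f k"
      by (simp add: sum.inter_filter[symmetric])
    also have "\<dots> = of_int (N - \<bar>k\<bar>) * f k"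
      using card_lag_pairs[OF \<open>\<bar>k\<bar> \<le> N\<close>] \<open>\<bar>k\<bar> \<le> N\<close> unfolding P_def by simp
    finally show ?thesis .
  qed
  have "(\<Sum>i\<in>{1..N}. \<Sum>j\<in>{1..N}. f (i - j)) = (\<Sum>j\<in>{1..N}. \<Sum>i\<in>{1..N}. f (i - j))"
    by (rule sum.swap)
  also have "\<dots> = (\<Sum>j\<in>{1..N}. \<Sum>k\<in>{-N..N}. if P j k then f k else 0)"
    using inner by (rule sum.cong[OF refl])
  also have "\<dots> = (\<Sum>k\<in>{-N..N}. \<Sum>j\<in>{1..N}. if P j k then f k else 0)"
    by (rule sum.swap)
  also have "\<dots> = (\<Sum>k\<in>{-N..N}. of_int (N - \<bar>k\<bar>) * f k)"
    using count by (rule sum.cong[OF refl])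
  finally show ?thesis .
qed

lemma sum_by_lag:
  fixes f :: "int \<Rightarrow> 'a::comm_ring_1"
  shows "(\<Sum>t1\<in>{1..n::nat}. \<Sum>t2\<in>{1..n}. f (int t1 - int t2))
       = (\<Sum>k\<in>{-int n..int n}. of_int (int n - \<bar>k\<bar>) * f k)"
proof -
  have "{1..int n} = int ` {1..n}" by (simp add: image_int_atLeastAtMost)
  then show ?thesis
    using sum_by_lag_int[of f "int n"] by (simp add: sum.reindex)
qed

definition lag_term :: "(real \<Rightarrow> real) \<Rightarrow> (real \<Rightarrow> real) \<Rightarrow> nat \<Rightarrow> real \<Rightarrow> real \<Rightarrow> real \<Rightarrow> int \<Rightarrow> complex" where
  "lag_term K C n \<rho> bn lam k =
     complex_of_real ((1 - \<bar>real_of_int k\<bar> / real n) * K (bn * real_of_int k) * C (real_of_int k / \<rho>))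
     * cis (- (real_of_int k * lam / \<rho>))"

definition lag_window_sum :: "(real \<Rightarrow> real) \<Rightarrow> (real \<Rightarrow> real) \<Rightarrow> nat \<Rightarrow> real \<Rightarrow> real \<Rightarrow> real \<Rightarrow> complex" where
  "lag_window_sum K C n \<rho> bn lam =
     complex_of_real (1 / (2 * pi * \<rho>)) * (\<Sum>k\<in>{-int n..int n}. lag_term K C n \<rho> bn lam k)"

lemma scaled_product_expectation:
  fixes k :: real and z :: complex
  assumes proc: "stationary_process M r X" and a: "a \<in> {1..r}" and b: "b \<in> {1..r}"
  shows "integrable M (\<lambda>\<omega>. complex_of_real (k * X a s \<omega> * X b t \<omega>) * z)"
    and "(\<integral>\<omega>. complex_of_real (k * X a s \<omega> * X b t \<omega>) * z \<partial>M)
      = complex_of_real (k * cross_cov M X a b (s - t)) * z"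
proof -
  have "integrable M (\<lambda>\<omega>. k * X a s \<omega> * X b t \<omega>)"
    using proc_product_integrable[OF proc a b] by (simp add: mult.assoc)
  then show "integrable M (\<lambda>\<omega>. complex_of_real (k * X a s \<omega> * X b t \<omega>) * z)"
    by (intro integrable_mult_left integrable_of_real)
  have "(\<integral>\<omega>. k * X a s \<omega> * X b t \<omega> \<partial>M) = k * cross_cov M X a b (s - t)"
    using proc_product_expectation[OF proc a b] by (simp add: mult.assoc)
  then show "(\<integral>\<omega>. complex_of_real (k * X a s \<omega> * X b t \<omega>) * z \<partial>M)
      = complex_of_real (k * cross_cov M X a b (s - t)) * z"
    by (simp only: integral_mult_left_zero integral_complex_of_real)
qed

lemma estimator_expectation:
  assumes proc: "stationary_process M r X" and a1: "a1 \<in> {1..r}" and a2: "a2 \<in> {1..r}"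
    and n: "n \<ge> 1" and rho: "\<rho> > 0" and lam: "- pi * \<rho> \<le> lam" "lam \<le> pi * \<rho>"
  shows "(\<integral>\<omega>. spec_estimator K bn \<rho> n X a1 a2 lam \<omega> \<partial>M)
      = lag_window_sum K (cross_cov M X a1 a2) n \<rho> bn lam"
proof -
  define C where "C = cross_cov M X a1 a2"
  define f where "f k = complex_of_real (K (bn * real_of_int k) * C (real_of_int k / \<rho>))
    * cis (- (real_of_int k * lam / \<rho>))" for k :: int
  define Y where "Y t1 t2 \<omega> = complex_of_real (K (bn * (real t1 - real t2)) * X a1 (real t1 / \<rho>) \<omega>
    * X a2 (real t2 / \<rho>) \<omega>) * cis (- ((real t1 - real t2) * lam / \<rho>))" for t1 t2 :: nat and \<omega>
  have Y_int: "integrable M (Y t1 t2)" for t1 t2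
    unfolding Y_def by (rule scaled_product_expectation(1)[OF proc a1 a2])
  have Y_exp: "integral\<^sup>L M (Y t1 t2) = f (int t1 - int t2)" for t1 t2
    unfolding Y_def f_def C_def scaled_product_expectation(2)[OF proc a1 a2]
    by (simp add: diff_divide_distrib)
  have "(\<integral>\<omega>. spec_estimator K bn \<rho> n X a1 a2 lam \<omega> \<partial>M)
      = (\<integral>\<omega>. complex_of_real (1 / (2 * pi * real n * \<rho>)) * (\<Sum>t1\<in>{1..n}. \<Sum>t2\<in>{1..n}. Y t1 t2 \<omega>) \<partial>M)"
    using lam by (simp add: spec_estimator_def Y_def)
  also have "\<dots> = complex_of_real (1 / (2 * pi * real n * \<rho>)) * (\<Sum>t1\<in>{1..n}. \<Sum>t2\<in>{1..n}. f (int t1 - int t2))"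
    using Y_int by (simp add: integrable_sum Y_exp)
  also have "\<dots> = complex_of_real (1 / (2 * pi * real n * \<rho>)) * (\<Sum>k\<in>{-int n..int n}. of_int (int n - \<bar>k\<bar>) * f k)"
    by (simp only: sum_by_lag)
  also have "\<dots> = lag_window_sum K C n \<rho> bn lam"
  proof -
    have "of_int (int n - \<bar>k\<bar>) * f k = complex_of_real (real n) * lag_term K C n \<rho> bn lam k" for k
    proof -
      have "real_of_int (int n - \<bar>k\<bar>) = real n * (1 - \<bar>real_of_int k\<bar> / real n)"
        using n by (simp add: field_simps)
      then have "(of_int (int n - \<bar>k\<bar>) :: complex) = complex_of_real (real n * (1 - \<bar>real_of_int k\<bar> / real n))"
        by (metis of_real_of_int_eq)
      then show ?thesis unfolding f_def lag_term_def by (simp add: mult_ac)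
    qed
    then show ?thesis
      using n rho by (simp add: lag_window_sum_def sum_distrib_left[symmetric] field_simps)
  qed
  finally show ?thesis unfolding C_def .
qed

text \<open>The index of the cell containing u is grid_index rho u, chosen so
  that |u| <= |k/rho|, which lets the monotone envelope of Assumption 1 dominate C(k/rho).\<close>

definition grid_index :: "real \<Rightarrow> real \<Rightarrow> int" where
  "grid_index \<rho> u = (if u > 0 then \<lceil>u * \<rho>\<rceil> else \<lfloor>u * \<rho>\<rfloor>)"

definition grid_cell :: "real \<Rightarrow> int \<Rightarrow> real set" where
  "grid_cell \<rho> k = (if k > 0 then {(real_of_int k - 1) / \<rho> <.. real_of_int k / \<rho>}
                    else {real_of_int k / \<rho> ..< (real_of_int k + 1) / \<rho>})"

lemma grid_cell_iff:
  assumes rho: "\<rho> > 0" and k: "k \<noteq> 0"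
  shows "u \<in> grid_cell \<rho> k \<longleftrightarrow> u \<noteq> 0 \<and> k = grid_index \<rho> u"
proof -
  have "u \<in> grid_cell \<rho> k \<longleftrightarrow> (if k > 0 then real_of_int k - 1 < u * \<rho> \<and> u * \<rho> \<le> real_of_int k
                               else real_of_int k \<le> u * \<rho> \<and> u * \<rho> < real_of_int k + 1)"
    using rho by (simp add: grid_cell_def pos_divide_less_eq pos_le_divide_eq pos_less_divide_eq pos_divide_le_eq)
  also have "\<dots> \<longleftrightarrow> u \<noteq> 0 \<and> k = grid_index \<rho> u"
  proof (cases "u > 0")
    case True
    then have "u * \<rho> > 0" using rho by simp
    then show ?thesis using True k unfolding grid_index_def
      by (auto simp: ceiling_eq_iff) linarith+
  next
    case False
    then have "u * \<rho> \<le> 0" using rho by (simp add: mult_nonpos_nonneg)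
    then show ?thesis using False k rho unfolding grid_index_def
      by (auto simp: floor_eq_iff mult_less_0_iff) linarith+
  qed
  finally show ?thesis .
qed

lemma grid_index_bounds:
  assumes rho: "\<rho> > 0"
  shows "\<bar>real_of_int (grid_index \<rho> u) - u * \<rho>\<bar> \<le> 1"
    and "u \<noteq> 0 \<Longrightarrow> grid_index \<rho> u \<noteq> 0"
    and "\<bar>u\<bar> \<le> \<bar>real_of_int (grid_index \<rho> u) / \<rho>\<bar>"
proof -
  show "\<bar>real_of_int (grid_index \<rho> u) - u * \<rho>\<bar> \<le> 1"
    unfolding grid_index_def by (cases "u > 0") (simp_all, linarith+)
  show "grid_index \<rho> u \<noteq> 0" if "u \<noteq> 0"
  proof (cases "u > 0")
    case True
    then have "0 < u * \<rho>" using rho by simp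
    then show ?thesis using True unfolding grid_index_def by (metis zero_less_ceiling less_irrefl)
  next
    case False
    then have "u * \<rho> < 0" using that rho by (simp add: mult_less_0_iff)
    then show ?thesis using False unfolding grid_index_def by (metis floor_less_zero less_irrefl)
  qed
  have "u \<le> real_of_int \<lceil>u * \<rho>\<rceil> / \<rho>" "real_of_int \<lfloor>u * \<rho>\<rfloor> / \<rho> \<le> u"
    using rho by (simp_all add: pos_le_divide_eq pos_divide_le_eq)
  then show "\<bar>u\<bar> \<le> \<bar>real_of_int (grid_index \<rho> u) / \<rho>\<bar>"
    unfolding grid_index_def by (cases "u > 0") (simp_all add: abs_if)
qed

lemma grid_cell_measure:
  assumes rho: "\<rho> > 0"
  shows "grid_cell \<rho> k \<in> sets lborel" "emeasure lborel (grid_cell \<rho> k) < \<infinity>"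
    "measure lborel (grid_cell \<rho> k) = 1 / \<rho>"
proof -
  have le: "(real_of_int k - 1) / \<rho> \<le> real_of_int k / \<rho>" "real_of_int k / \<rho> \<le> (real_of_int k + 1) / \<rho>"
    using rho by (simp_all add: divide_right_mono)
  show "grid_cell \<rho> k \<in> sets lborel" by (simp add: grid_cell_def)
  show "emeasure lborel (grid_cell \<rho> k) < \<infinity>" using le by (simp add: grid_cell_def)
  show "measure lborel (grid_cell \<rho> k) = 1 / \<rho>"
    using le by (simp add: grid_cell_def diff_divide_distrib add_divide_distrib)
qed

definition lag_step :: "(real \<Rightarrow> real) \<Rightarrow> (real \<Rightarrow> real) \<Rightarrow> nat \<Rightarrow> real \<Rightarrow> real \<Rightarrow> real \<Rightarrow> real \<Rightarrow> complex" where
  "lag_step K C n \<rho> bn lam u =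
     (\<Sum>k\<in>{-int n..int n} - {0}. indicator (grid_cell \<rho> k) u *\<^sub>R lag_term K C n \<rho> bn lam k)"

text \<open>Closed form of the step function: at most one cell contains u.\<close>
lemma lag_step_eq:
  assumes rho: "\<rho> > 0"
  shows "lag_step K C n \<rho> bn lam u =
    (if u \<noteq> 0 \<and> grid_index \<rho> u \<in> {-int n..int n} - {0}
     then lag_term K C n \<rho> bn lam (grid_index \<rho> u) else 0)"
proof -
  have "lag_step K C n \<rho> bn lam u = (\<Sum>k\<in>{-int n..int n} - {0}.
      if k = grid_index \<rho> u then (if u \<noteq> 0 then lag_term K C n \<rho> bn lam k else 0) else 0)"
    unfolding lag_step_def using grid_cell_iff[OF rho]
    by (intro sum.cong refl) (auto simp: indicator_def)
  then show ?thesis by (cases "u = 0") simp_all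
qed

lemma lag_step_integral:
  assumes rho: "\<rho> > 0"
  shows "integrable lborel (lag_step K C n \<rho> bn lam)"
    and "integral\<^sup>L lborel (lag_step K C n \<rho> bn lam)
      = complex_of_real (1 / \<rho>) * (\<Sum>k\<in>{-int n..int n} - {0}. lag_term K C n \<rho> bn lam k)"
proof -
  define I where "I k u = indicator (grid_cell \<rho> k) u *\<^sub>R lag_term K C n \<rho> bn lam k" for k u
  have I_int: "integrable lborel (I k)" for k
    using grid_cell_measure[OF rho, of k] unfolding I_def by (intro integrable_scaleR_left) auto
  have step: "lag_step K C n \<rho> bn lam = (\<lambda>u. \<Sum>k\<in>{-int n..int n} - {0}. I k u)"
    unfolding lag_step_def I_def by blast
  show "integrable lborel (lag_step K C n \<rho> bn lam)"
    unfolding step using I_int by (rule Bochner_Integration.integrable_sum)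
  have "integral\<^sup>L lborel (lag_step K C n \<rho> bn lam) = (\<Sum>k\<in>{-int n..int n} - {0}. integral\<^sup>L lborel (I k))"
    unfolding step using I_int by (rule Bochner_Integration.integral_sum)
  also have "\<dots> = (\<Sum>k\<in>{-int n..int n} - {0}. (1 / \<rho>) *\<^sub>R lag_term K C n \<rho> bn lam k)"
    using grid_cell_measure[OF rho] unfolding I_def by simp
  finally show "integral\<^sup>L lborel (lag_step K C n \<rho> bn lam)
      = complex_of_real (1 / \<rho>) * (\<Sum>k\<in>{-int n..int n} - {0}. lag_term K C n \<rho> bn lam k)"
    by (simp add: scaleR_conv_of_real sum_distrib_left)
qed

lemma lag_window_sum_as_integral:
  assumes rho: "\<rho> > 0" and K0: "K 0 = 1"
  shows "lag_window_sum K C n \<rho> bn lam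
    = complex_of_real (1 / (2 * pi)) * (complex_of_real (C 0 / \<rho>) + integral\<^sup>L lborel (lag_step K C n \<rho> bn lam))"
proof -
  have "(\<Sum>k\<in>{-int n..int n}. lag_term K C n \<rho> bn lam k)
      = lag_term K C n \<rho> bn lam 0 + (\<Sum>k\<in>{-int n..int n} - {0}. lag_term K C n \<rho> bn lam k)"
    by (subst sum.remove[of _ 0]) auto
  moreover have "lag_term K C n \<rho> bn lam 0 = complex_of_real (C 0)"
    unfolding lag_term_def using K0 by simp
  ultimately show ?thesis
    unfolding lag_window_sum_def lag_step_integral(2)[OF rho] using rho by (simp add: field_simps)
qed

lemma lag_step_bound:
  assumes rho: "\<rho> > 0" and Kb: "\<And>x. \<bar>K x\<bar> \<le> B"
    and Cg: "\<And>s. \<bar>C s\<bar> \<le> g s" and gmono: "\<And>s t. \<bar>s\<bar> \<le> \<bar>t\<bar> \<Longrightarrow> g t \<le> g s"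
  shows "norm (lag_step K C n \<rho> bn lam u) \<le> B * g u"
proof (cases "u \<noteq> 0 \<and> grid_index \<rho> u \<in> {-int n..int n} - {0}")
  case False
  then have "lag_step K C n \<rho> bn lam u = 0" by (simp only: lag_step_eq[OF rho] if_False)
  moreover have "0 \<le> B" "0 \<le> g u" using Kb[of 0] Cg[of u] by linarith+
  ultimately show ?thesis by simp
next
  case True
  define k where "k = grid_index \<rho> u"
  have k: "k \<noteq> 0" "\<bar>k\<bar> \<le> int n" using True k_def by auto
  have weight: "\<bar>1 - \<bar>real_of_int k\<bar> / real n\<bar> \<le> 1"
    using k by (simp add: divide_le_eq_1 abs_le_iff)
  have cov: "\<bar>C (real_of_int k / \<rho>)\<bar> \<le> g u"
    using Cg[of "real_of_int k / \<rho>"] gmono[OF grid_index_bounds(3)[OF rho, of u]]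
    unfolding k_def by linarith
  have "lag_step K C n \<rho> bn lam u = lag_term K C n \<rho> bn lam k"
    unfolding k_def by (simp only: lag_step_eq[OF rho] if_P[OF True])
  then have "norm (lag_step K C n \<rho> bn lam u) = norm (lag_term K C n \<rho> bn lam k)" by simp
  also have "\<dots> = \<bar>1 - \<bar>real_of_int k\<bar> / real n\<bar> * \<bar>K (bn * real_of_int k)\<bar> * \<bar>C (real_of_int k / \<rho>)\<bar>"
    unfolding lag_term_def norm_mult norm_of_real norm_cis abs_mult by simp
  also have "\<dots> \<le> 1 * B * g u"
    using Kb[of 0] by (intro mult_mono weight Kb cov) auto
  finally show ?thesis by simp
qed

lemma grid_point_tendsto:
  assumes rpos: "\<And>m. \<rho> m > 0" and R: "filterlim \<rho> at_top sequentially"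
  shows "(\<lambda>m. real_of_int (grid_index (\<rho> m) u) / \<rho> m) \<longlonglongrightarrow> u"
proof (rule LIM_zero_cancel, rule Lim_null_comparison)
  show "\<forall>\<^sub>F m in sequentially. norm (real_of_int (grid_index (\<rho> m) u) / \<rho> m - u) \<le> inverse (\<rho> m)"
  proof (intro always_eventually allI)
    fix m
    have "norm (real_of_int (grid_index (\<rho> m) u) / \<rho> m - u)
        = \<bar>real_of_int (grid_index (\<rho> m) u) - u * \<rho> m\<bar> / \<rho> m"
      using rpos[of m] by (simp add: field_simps)
    also have "\<dots> \<le> 1 / \<rho> m"
      using grid_index_bounds(1)[OF rpos[of m], of u] rpos[of m] by (simp add: divide_right_mono)
    finally show "norm (real_of_int (grid_index (\<rho> m) u) / \<rho> m - u) \<le> inverse (\<rho> m)"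
      by (simp add: inverse_eq_divide)
  qed
  show "(\<lambda>m. inverse (\<rho> m)) \<longlonglongrightarrow> 0" by (rule tendsto_inverse_0_at_top[OF R])
qed

lemma lag_step_at_grid_point:
  assumes rho: "\<rho> > 0" "\<rho> \<ge> 1" and u: "u \<noteq> 0" and n: "(\<bar>u\<bar> + 1) * \<rho> \<le> real n"
  shows "lag_step K C n \<rho> bn lam u = lag_term K C n \<rho> bn lam (grid_index \<rho> u)"
proof -
  define k where "k = grid_index \<rho> u"
  have "\<bar>real_of_int k\<bar> \<le> \<bar>real_of_int k - u * \<rho>\<bar> + \<bar>u\<bar> * \<rho>"
    using abs_triangle_ineq[of "real_of_int k - u * \<rho>" "u * \<rho>"] rho by (simp add: abs_mult)
  also have "\<dots> \<le> 1 + \<bar>u\<bar> * \<rho>"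
    using grid_index_bounds(1)[OF rho(1), of u] unfolding k_def by simp
  also have "\<dots> \<le> real n" using rho n by (simp add: algebra_simps)
  finally have "\<bar>k\<bar> \<le> int n" by linarith
  moreover have "k \<noteq> 0" using grid_index_bounds(2)[OF rho(1) u] unfolding k_def .
  ultimately have in_range: "u \<noteq> 0 \<and> grid_index \<rho> u \<in> {-int n..int n} - {0}"
    using u unfolding k_def by auto
  show ?thesis by (simp only: lag_step_eq[OF rho(1)] if_P[OF in_range])
qed

text \<open>Pointwise limit of the step functions: at u \<noteq> 0 they converge to C(u) e^{-i u lam0},
  because k/rho -> u, |k|/n ~ |u| rho/n -> 0 and b k = (rho b)(k/rho) -> 0.\<close>
lemma lag_step_pointwise:
  assumes Ccont: "\<And>x. isCont C x" and Kcont: "\<And>x. isCont K x" and K0: "K 0 = 1"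
    and rpos: "\<And>m. \<rho> m > 0"
    and Q: "filterlim (\<lambda>m. real (N m) / \<rho> m) at_top sequentially"
    and R: "filterlim \<rho> at_top sequentially"
    and RB: "(\<lambda>m. \<rho> m * b m) \<longlonglongrightarrow> 0"
    and L: "lam \<longlonglongrightarrow> lam0" and u: "u \<noteq> 0"
  shows "(\<lambda>m. lag_step K C (N m) (\<rho> m) (b m) (lam m) u) \<longlonglongrightarrow> complex_of_real (C u) * cis (- (u * lam0))"
proof -
  define v where "v m = real_of_int (grid_index (\<rho> m) u) / \<rho> m" for m
  define T where "T m = complex_of_real ((1 - \<bar>v m\<bar> * inverse (real (N m) / \<rho> m))
    * K ((\<rho> m * b m) * v m) * C (v m)) * cis (- (v m * lam m))" for m
  have "T \<longlonglongrightarrow> complex_of_real ((1 - \<bar>u\<bar> * 0) * K (0 * u) * C u) * cis (- (u * lam0))"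
    unfolding T_def v_def
    by (intro tendsto_intros grid_point_tendsto[OF rpos R] tendsto_inverse_0_at_top[OF Q] RB L
        isCont_tendsto_compose[OF Kcont] isCont_tendsto_compose[OF Ccont])
  then have T_lim: "T \<longlonglongrightarrow> complex_of_real (C u) * cis (- (u * lam0))" using K0 by simp
  have "\<forall>\<^sub>F m in sequentially. real (N m) / \<rho> m \<ge> \<bar>u\<bar> + 1" "\<forall>\<^sub>F m in sequentially. \<rho> m \<ge> 1"
    using Q R by (simp_all add: filterlim_at_top)
  then have "\<forall>\<^sub>F m in sequentially. T m = lag_step K C (N m) (\<rho> m) (b m) (lam m) u"
  proof eventually_elim
    case (elim m)
    have rm: "\<rho> m > 0" by (rule rpos)
    have "(\<bar>u\<bar> + 1) * \<rho> m \<le> real (N m)" using elim(1) rm by (simp add: pos_le_divide_eq)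
    then have "lag_step K C (N m) (\<rho> m) (b m) (lam m) u
        = lag_term K C (N m) (\<rho> m) (b m) (lam m) (grid_index (\<rho> m) u)"
      by (rule lag_step_at_grid_point[OF rm elim(2) u])
    also have "\<dots> = T m"
      using rm unfolding lag_term_def T_def v_def by (simp add: field_simps abs_div)
    finally show ?case by simp
  qed
  with T_lim show ?thesis by (rule Lim_transform_eventually)
qed

text \<open>Under Assumptions 3 and 4, n/rho = (n b) / (rho b) tends to infinity.\<close>
lemma sample_ratio_at_top:
  assumes rpos: "\<And>m. \<rho> m > 0" and bpos: "\<And>m. b m > 0"
    and NB: "filterlim (\<lambda>m. real (N m) * b m) at_top sequentially"
    and RB: "(\<lambda>m. \<rho> m * b m) \<longlonglongrightarrow> 0"
  shows "filterlim (\<lambda>m. real (N m) / \<rho> m) at_top sequentially"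
proof -
  have "filterlim (\<lambda>m. inverse (\<rho> m * b m)) at_top sequentially"
    using RB by (rule filterlim_inverse_at_top) (simp add: rpos bpos)
  then have "filterlim (\<lambda>m. real (N m) * b m * inverse (\<rho> m * b m)) at_top sequentially"
    by (rule filterlim_at_top_mult_at_top[OF NB])
  moreover have "real (N m) * b m * inverse (\<rho> m * b m) = real (N m) / \<rho> m" for m
    using bpos[of m] rpos[of m] by (simp add: field_simps)
  ultimately show ?thesis by simp
qed

lemma fourier_integral_tendsto:
  fixes C g :: "real \<Rightarrow> real" and lam :: "nat \<Rightarrow> real"
  assumes Ccont: "\<And>x. isCont C x" and g_int: "integrable lborel g" and Cg: "\<And>s. \<bar>C s\<bar> \<le> g s"
    and L: "lam \<longlonglongrightarrow> lam0"
  shows "(\<lambda>m. \<integral>t. complex_of_real (C t) * cis (- (t * lam m)) \<partial>lborel)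
    \<longlonglongrightarrow> (\<integral>t. complex_of_real (C t) * cis (- (t * lam0)) \<partial>lborel)"
proof (rule integral_dominated_convergence[where w="g"])
  have Cc: "continuous_on UNIV C" by (simp add: Ccont continuous_at_imp_continuous_on)
  have cont: "continuous_on UNIV (\<lambda>t. complex_of_real (C t) * cis (- (t * l)))" for l
    by (intro continuous_intros Cc)
  have meas: "(\<lambda>t. complex_of_real (C t) * cis (- (t * l))) \<in> borel_measurable lborel" for l
    using borel_measurable_continuous_onI[OF cont[of l]] by simp
  show "AE t in lborel. (\<lambda>m. complex_of_real (C t) * cis (- (t * lam m)))
      \<longlonglongrightarrow> complex_of_real (C t) * cis (- (t * lam0))"
    by (intro AE_I2 tendsto_intros L)
  show "AE t in lborel. norm (complex_of_real (C t) * cis (- (t * lam m))) \<le> g t" for m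
    by (intro AE_I2) (simp add: norm_mult Cg)
  show "(\<lambda>t. complex_of_real (C t) * cis (- (t * lam m))) \<in> borel_measurable lborel" for m
    by (rule meas)
  show "(\<lambda>t. complex_of_real (C t) * cis (- (t * lam0))) \<in> borel_measurable lborel"
    by (rule meas)
qed (rule g_int)

text \<open>The integrals of the step functions converge to the same Fourier integral, dominated
  by sup|K| times the envelope g.\<close>
lemma lag_step_integral_tendsto:
  fixes C K g :: "real \<Rightarrow> real" and N :: "nat \<Rightarrow> nat" and \<rho> b lam :: "nat \<Rightarrow> real"
  assumes Ccont: "\<And>x. isCont C x" and g_int: "integrable lborel g"
    and Cg: "\<And>s. \<bar>C s\<bar> \<le> g s" and gmono: "\<And>s t. \<bar>s\<bar> \<le> \<bar>t\<bar> \<Longrightarrow> g t \<le> g s"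
    and Kcont: "\<And>x. isCont K x" and K0: "K 0 = 1" and Kb: "\<And>x. \<bar>K x\<bar> \<le> B"
    and rpos: "\<And>m. \<rho> m > 0" and bpos: "\<And>m. b m > 0"
    and NB: "filterlim (\<lambda>m. real (N m) * b m) at_top sequentially"
    and R: "filterlim \<rho> at_top sequentially"
    and RB: "(\<lambda>m. \<rho> m * b m) \<longlonglongrightarrow> 0"
    and L: "lam \<longlonglongrightarrow> lam0"
  shows "(\<lambda>m. integral\<^sup>L lborel (lag_step K C (N m) (\<rho> m) (b m) (lam m)))
    \<longlonglongrightarrow> (\<integral>t. complex_of_real (C t) * cis (- (t * lam0)) \<partial>lborel)"
proof (rule integral_dominated_convergence[where w="\<lambda>u. B * g u"])
  have "continuous_on UNIV (\<lambda>t. complex_of_real (C t) * cis (- (t * lam0)))"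
    by (intro continuous_intros) (simp add: Ccont continuous_at_imp_continuous_on)
  then show "(\<lambda>t. complex_of_real (C t) * cis (- (t * lam0))) \<in> borel_measurable lborel"
    using borel_measurable_continuous_onI by simp
  show "lag_step K C (N m) (\<rho> m) (b m) (lam m) \<in> borel_measurable lborel" for m
    using lag_step_integral(1)[OF rpos] by (rule borel_measurable_integrable)
  show "integrable lborel (\<lambda>u. B * g u)" using g_int by simp
  show "AE u in lborel. (\<lambda>m. lag_step K C (N m) (\<rho> m) (b m) (lam m) u)
      \<longlonglongrightarrow> complex_of_real (C u) * cis (- (u * lam0))"
    using AE_lborel_singleton[of 0]
  proof eventually_elim
    case (elim u)
    show ?case
      by (rule lag_step_pointwise[OF Ccont Kcont K0 rpos sample_ratio_at_top[OF rpos bpos NB RB] R RB L elim])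
  qed
  show "AE u in lborel. norm (lag_step K C (N m) (\<rho> m) (b m) (lam m) u) \<le> B * g u" for m
    by (intro AE_I2 lag_step_bound[OF rpos Kb Cg gmono])
qed

text \<open>The bias of the lag-window sum tends to 0 along any sequence lam_m -> lam0: both
  integrals converge to the Fourier integral at lam0 and the k = 0 term C(0)/rho vanishes.\<close>
lemma lag_window_bias_tendsto:
  fixes C K g :: "real \<Rightarrow> real" and N :: "nat \<Rightarrow> nat" and \<rho> b lam :: "nat \<Rightarrow> real"
  assumes Ccont: "\<And>x. isCont C x" and g_int: "integrable lborel g"
    and Cg: "\<And>s. \<bar>C s\<bar> \<le> g s" and gmono: "\<And>s t. \<bar>s\<bar> \<le> \<bar>t\<bar> \<Longrightarrow> g t \<le> g s"
    and Kcont: "\<And>x. isCont K x" and K0: "K 0 = 1" and Kb: "\<And>x. \<bar>K x\<bar> \<le> B"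
    and rpos: "\<And>m. \<rho> m > 0" and bpos: "\<And>m. b m > 0"
    and NB: "filterlim (\<lambda>m. real (N m) * b m) at_top sequentially"
    and R: "filterlim \<rho> at_top sequentially"
    and RB: "(\<lambda>m. \<rho> m * b m) \<longlonglongrightarrow> 0"
    and L: "lam \<longlonglongrightarrow> lam0"
  shows "(\<lambda>m. lag_window_sum K C (N m) (\<rho> m) (b m) (lam m) - spec_density C (lam m)) \<longlonglongrightarrow> 0"
proof -
  have "(\<lambda>m. C 0 * inverse (\<rho> m)) \<longlonglongrightarrow> C 0 * 0"
    by (intro tendsto_mult tendsto_const tendsto_inverse_0_at_top[OF R])
  then have "(\<lambda>m. complex_of_real (C 0 * inverse (\<rho> m))) \<longlonglongrightarrow> complex_of_real (C 0 * 0)"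
    by (rule tendsto_of_real)
  then have origin_lim: "(\<lambda>m. complex_of_real (C 0 / \<rho> m)) \<longlonglongrightarrow> 0"
    by (simp add: divide_inverse)
  note step_lim = lag_step_integral_tendsto[OF Ccont g_int Cg gmono Kcont K0 Kb rpos bpos NB R RB L]
  note fourier_lim = fourier_integral_tendsto[OF Ccont g_int Cg L]
  have "(\<lambda>m. complex_of_real (1 / (2 * pi))
        * (complex_of_real (C 0 / \<rho> m) + integral\<^sup>L lborel (lag_step K C (N m) (\<rho> m) (b m) (lam m)))
      - complex_of_real (1 / (2 * pi)) * (\<integral>t. complex_of_real (C t) * cis (- (t * lam m)) \<partial>lborel))
      \<longlonglongrightarrow> complex_of_real (1 / (2 * pi)) * (0 + (\<integral>t. complex_of_real (C t) * cis (- (t * lam0)) \<partial>lborel))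
        - complex_of_real (1 / (2 * pi)) * (\<integral>t. complex_of_real (C t) * cis (- (t * lam0)) \<partial>lborel)"
    by (intro tendsto_intros step_lim fourier_lim origin_lim)
  then show ?thesis
    unfolding lag_window_sum_as_integral[OF rpos, of K, OF K0] spec_density_def by simp
qed

text \<open>Along n_m -> infinity, rho_m -> infinity and bounded frequencies lam_m, eventually
  n_m >= 1 and |lam_m| <= pi rho_m, so the expected estimator is the lag-window sum.\<close>
lemma estimator_expectation_eventually:
  assumes proc: "stationary_process M r X" and a1: "a1 \<in> {1..r}" and a2: "a2 \<in> {1..r}"
    and rpos: "\<And>m. \<rho> m > 0" and N: "filterlim N at_top sequentially"
    and R: "filterlim \<rho> at_top sequentially" and lam: "\<And>m. \<bar>lam m\<bar> \<le> \<Lambda>"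
  shows "\<forall>\<^sub>F m in sequentially. (\<integral>\<omega>. spec_estimator K (b m) (\<rho> m) (N m) X a1 a2 (lam m) \<omega> \<partial>M)
    = lag_window_sum K (cross_cov M X a1 a2) (N m) (\<rho> m) (b m) (lam m)"
proof -
  have "\<forall>\<^sub>F m in sequentially. 1 \<le> N m" "\<forall>\<^sub>F m in sequentially. \<Lambda> / pi \<le> \<rho> m"
    using N R by (simp_all add: filterlim_at_top)
  then show ?thesis
  proof eventually_elim
    case (elim m)
    have "\<Lambda> \<le> pi * \<rho> m" using elim(2) by (simp add: pos_divide_le_eq mult.commute)
    then have "- pi * \<rho> m \<le> lam m" "lam m \<le> pi * \<rho> m" using lam[of m] by linarith+
    then show ?case by (rule estimator_expectation[OF proc a1 a2 elim(1) rpos])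
  qed
qed

lemma uniformly_small_on_compact:
  fixes f :: "nat \<Rightarrow> 'a::metric_space \<Rightarrow> 'b::real_normed_vector"
  assumes S: "compact S"
    and seq: "\<And>\<tau> x x0. strict_mono \<tau> \<Longrightarrow> (\<And>m. x m \<in> S) \<Longrightarrow> x \<longlonglongrightarrow> x0
               \<Longrightarrow> (\<lambda>m. f (\<tau> m) (x m)) \<longlonglongrightarrow> 0"
  shows "\<forall>\<epsilon>>0. \<forall>\<^sub>F n in sequentially. \<forall>x\<in>S. norm (f n x) < \<epsilon>"
proof (intro allI impI, rule ccontr)
  fix \<epsilon> :: real
  assume \<epsilon>: "\<epsilon> > 0" and not_ev: "\<not> (\<forall>\<^sub>F n in sequentially. \<forall>x\<in>S. norm (f n x) < \<epsilon>)"
  then have "frequently (\<lambda>n. \<exists>x\<in>S. \<not> norm (f n x) < \<epsilon>) sequentially"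
    by (simp add: not_eventually)
  then have "infinite {n. \<exists>x\<in>S. \<not> norm (f n x) < \<epsilon>}"
    by (simp add: frequently_cofinite[symmetric] cofinite_eq_sequentially)
  then obtain \<sigma> :: "nat \<Rightarrow> nat" where \<sigma>: "strict_mono \<sigma>"
    and "\<And>m. \<sigma> m \<in> {n. \<exists>x\<in>S. \<not> norm (f n x) < \<epsilon>}"
    using infinite_enumerate by blast
  then have "\<forall>m. \<exists>y. y \<in> S \<and> \<not> norm (f (\<sigma> m) y) < \<epsilon>" by blast
  then obtain x where x: "\<And>m. x m \<in> S" "\<And>m. \<not> norm (f (\<sigma> m) (x m)) < \<epsilon>" by metis
  obtain x0 \<phi> where \<phi>: "strict_mono (\<phi> :: nat \<Rightarrow> nat)" and lim: "(x \<circ> \<phi>) \<longlonglongrightarrow> x0"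
    using seq_compactE[OF compact_imp_seq_compact[OF S]] x(1) by blast
  have "(\<lambda>m. f ((\<sigma> \<circ> \<phi>) m) ((x \<circ> \<phi>) m)) \<longlonglongrightarrow> 0"
    by (rule seq[of "\<sigma> \<circ> \<phi>" "x \<circ> \<phi>" x0]) (use strict_mono_o[OF \<sigma> \<phi>] x(1) lim in auto)
  then have "\<forall>\<^sub>F m in sequentially. norm (f (\<sigma> (\<phi> m)) (x (\<phi> m))) < \<epsilon>"
    using \<epsilon> by (simp add: tendsto_iff dist_norm)
  then obtain m where "norm (f (\<sigma> (\<phi> m)) (x (\<phi> m))) < \<epsilon>" by (auto simp: eventually_sequentially)
  with x(2) show False by blast
qed

theorem theorem1:
  fixes M :: "'w measure" and r :: nat and X :: "nat \<Rightarrow> real \<Rightarrow> 'w \<Rightarrow> real"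
    and K :: "real \<Rightarrow> real" and b \<rho> :: "nat \<Rightarrow> real"
    and a1 a2 :: nat and lam_l lam_u :: real
  assumes proc: "stationary_process M r X"
    and A1: "assumption1 r (cross_cov M X)"
    and A2: "assumption2 K"
    and bpos: "\<forall>n. b n > 0" and rhopos: "\<forall>n. \<rho> n > 0"
    and A3: "filterlim (\<lambda>n. real n * b n) at_top sequentially"
    and A4a: "filterlim \<rho> at_top sequentially"
    and A4b: "(\<lambda>n. \<rho> n * b n) \<longlonglongrightarrow> 0"
    and a1: "a1 \<in> {1..r}" and a2: "a2 \<in> {1..r}"
  shows "\<forall>\<epsilon>>0. \<forall>\<^sub>F n in sequentially. \<forall>lam\<in>{lam_l..lam_u}.
           cmod ((\<integral>\<omega>. spec_estimator K (b n) (\<rho> n) n X a1 a2 lam \<omega> \<partial>M)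
                 - spec_density (cross_cov M X a1 a2) lam) < \<epsilon>"
proof (rule uniformly_small_on_compact[OF compact_Icc])
  fix \<tau> :: "nat \<Rightarrow> nat" and lam :: "nat \<Rightarrow> real" and lam0
  assume \<tau>: "strict_mono \<tau>" and lam: "\<And>m. lam m \<in> {lam_l..lam_u}" and L: "lam \<longlonglongrightarrow> lam0"
  obtain g where g: "integrable lborel g" "\<And>s. \<bar>cross_cov M X a1 a2 s\<bar> \<le> g s"
      "\<And>s t. \<bar>s\<bar> \<le> \<bar>t\<bar> \<Longrightarrow> g t \<le> g s"
    using cross_cov_envelope[OF proc A1 a1 a2] by blast
  obtain B where K: "\<And>x. isCont K x" "K 0 = 1" "\<And>x. \<bar>K x\<bar> \<le> B"
    using assumption2_kernel[OF A2] by blast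
  have \<tau>_lim: "filterlim \<tau> at_top sequentially" by (rule filterlim_subseq[OF \<tau>])
  have R: "filterlim (\<lambda>m. \<rho> (\<tau> m)) at_top sequentially" by (rule filterlim_compose[OF A4a \<tau>_lim])
  have bias: "(\<lambda>m. lag_window_sum K (cross_cov M X a1 a2) (\<tau> m) (\<rho> (\<tau> m)) (b (\<tau> m)) (lam m)
      - spec_density (cross_cov M X a1 a2) (lam m)) \<longlonglongrightarrow> 0"
  proof (rule lag_window_bias_tendsto[OF cross_cov_continuous[OF proc a1 a2] g K])
    show "filterlim (\<lambda>m. real (\<tau> m) * b (\<tau> m)) at_top sequentially"
      by (rule filterlim_compose[OF A3 \<tau>_lim])
    show "(\<lambda>m. \<rho> (\<tau> m) * b (\<tau> m)) \<longlonglongrightarrow> 0"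
      using LIMSEQ_subseq_LIMSEQ[OF A4b \<tau>] by (simp add: o_def)
  qed (use bpos rhopos R L in auto)
  have "\<forall>\<^sub>F m in sequentially. (\<integral>\<omega>. spec_estimator K (b (\<tau> m)) (\<rho> (\<tau> m)) (\<tau> m) X a1 a2 (lam m) \<omega> \<partial>M)
      = lag_window_sum K (cross_cov M X a1 a2) (\<tau> m) (\<rho> (\<tau> m)) (b (\<tau> m)) (lam m)"
  proof (rule estimator_expectation_eventually[OF proc a1 a2 _ \<tau>_lim R])
    show "\<bar>lam m\<bar> \<le> \<bar>lam_l\<bar> + \<bar>lam_u\<bar>" for m using lam[of m] by auto
  qed (use rhopos in auto)
  then have "\<forall>\<^sub>F m in sequentially.
      lag_window_sum K (cross_cov M X a1 a2) (\<tau> m) (\<rho> (\<tau> m)) (b (\<tau> m)) (lam m) - spec_density (cross_cov M X a1 a2) (lam m)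
      = (\<integral>\<omega>. spec_estimator K (b (\<tau> m)) (\<rho> (\<tau> m)) (\<tau> m) X a1 a2 (lam m) \<omega> \<partial>M) - spec_density (cross_cov M X a1 a2) (lam m)"
    by (rule eventually_mono) simp
  from Lim_transform_eventually[OF bias this]
  show "(\<lambda>m. (\<integral>\<omega>. spec_estimator K (b (\<tau> m)) (\<rho> (\<tau> m)) (\<tau> m) X a1 a2 (lam m) \<omega> \<partial>M)
      - spec_density (cross_cov M X a1 a2) (lam m)) \<longlonglongrightarrow> 0" .
qed

end
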